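(* Let $\mathsf C$ be a 2-category with a Lawvere weight $\mathrm W$ and let $\Delta:\mathsf C\to\mathsf{Cat}$ be a 2-functor. Then for all $X,Y\in\mathrm{Im}(\Delta)$, the 2-functor interleaving distance satisfies $d_{\Delta,\mathrm W}(X,Y)=d_{\mathsf C^\Delta,\mathrm W^\Delta}(X,Y)$.
   Context: Composition of 1-morphisms is written $gf=g\circ f$. A Lawvere weight is $\mathrm W$ on 1-morphisms of $\mathsf C$ with values in $\mathbb R\cup\{\infty\}$, $\mathrm W\ge0$, $\mathrm W(1_A)=0$, $\mathrm W(gf)\le\mathrm W(g)+\mathrm W(f)$. $\mathrm{Im}(\Delta)=\bigcup_{A\in\mathsf C_0}\Delta(A)_0$. 2-functor interleaving: $X\in\Delta(A)_0$, $Y\in\Delta(B)_0$ are $(g,h)$-interleaved ($g:B\to A$, $h:A\to B$) if there exist $\phi:X\to\Delta_g(Y)$ in $\Delta(A)$, $\psi:Y\to\Delta_h(X)$ in $\Delta(B)$ and 2-morphisms $\alpha:1_A\Rightarrow gh$, $\beta:1_B\Rightarrow hg$ with $\Delta_g(\psi)\circ\phi=\Delta(\alpha)_X$, $\Delta_h(\phi)\circ\psi=\Delta(\beta)_Y$; $d_{\Delta,\mathrm W}(X,Y)=\inf\max\{\mathrm W(g),\mathrm W(h)\}$ over such. The structure $(\mathsf C^\Delta,\mathrm W^\Delta)$: objects are the elements of $\mathrm{Im}(\Delta)$; a 1-morphism $X\to Y$ (with $X\in\Delta(A)_0,Y\in\Delta(B)_0$) is a pair $(g,\phi)$ with $g\in\mathsf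 C_1(B,A)$ and $\phi:X\to\Delta_g(Y)$ in $\Delta(A)$; composition $(h,\psi)\circ(g,\phi)=(gh,\Delta_g(\psi)\circ\phi)$, identity $(1_A,1_X)$. 2-morphisms: between $(1_A,1_X)$ and $(h,\psi):X\to X$ there is a single 2-morphism $\widehat\psi$ if there exists a 2-morphism $\alpha:1_A\Rightarrow h$ in $\mathsf C$ with $\Delta(\alpha)_X=\psi$; each 1-morphism $(g,\phi)$ has an identity 2-morphism $1_{g,\phi}$ (equal to $\widehat{1_X}$ when $(g,\phi)=(1_A,1_X)$); there are no other 2-morphisms. $\mathrm W^\Delta_1((g,\phi))=\mathrm W(g)$ and $\mathrm W^\Delta_2\equiv0$. Its interleaving distance: $d_{\mathsf C^\Delta,\mathrm W^\Delta}(X,Y)=\inf\max\{\mathrm W^\Delta_1(u),\mathrm W^\Delta_1(v),\mathrm W^\Delta_2(a),\mathrm W^\Delta_2(b)\}$ over 1-morphisms $u:X\to Y$, $v:Y\to X$ and 2-morphisms $a:1_X\Rightarrow v\circ u$, $b:1_Y\Rightarrow u\circ v$ of this structure. Infima of empty sets are $\infty$. *)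

theory Defs
  imports Main "HOL-Library.Extended_Real"
begin

record ('x,'a) cat =
  cObj  :: "'x set"
  cHom  :: "'x \<Rightarrow> 'x \<Rightarrow> 'a set"
  cComp :: "'a \<Rightarrow> 'a \<Rightarrow> 'a"   (* cComp g f = g o f *)
  cId   :: "'x \<Rightarrow> 'a"

definition is_category :: "('x,'a) cat \<Rightarrow> bool" where
  "is_category K \<longleftrightarrow>
     (\<forall>x\<in>cObj K. cId K x \<in> cHom K x x) \<and>
     (\<forall>x\<in>cObj K. \<forall>y\<in>cObj K. \<forall>z\<in>cObj K. \<forall>f g.
        f \<in> cHom K x y \<and> g \<in> cHom K y z \<longrightarrow> cComp K g f \<in> cHom K x z) \<and>
     (\<forall>w\<in>cObj K. \<forall>x\<in>cObj K. \<forall>y\<in>cObj K. \<forall>z\<in>cObj K. \<forall>f g h.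
        f \<in> cHom K w x \<and> g \<in> cHom K x y \<and> h \<in> cHom K y z \<longrightarrow>
        cComp K h (cComp K g f) = cComp K (cComp K h g) f) \<and>
     (\<forall>x\<in>cObj K. \<forall>y\<in>cObj K. \<forall>f. f \<in> cHom K x y \<longrightarrow>
        cComp K f (cId K x) = f \<and> cComp K (cId K y) f = f)"

definition is_functor ::
  "('x,'a) cat \<Rightarrow> ('x,'a) cat \<Rightarrow> ('x \<Rightarrow> 'x) \<Rightarrow> ('a \<Rightarrow> 'a) \<Rightarrow> bool" where
  "is_functor K L Fo Fm \<longleftrightarrow>
     (\<forall>x\<in>cObj K. Fo x \<in> cObj L) \<and>
     (\<forall>x\<in>cObj K. \<forall>y\<in>cObj K. \<forall>f\<in>cHom K x y. Fm f \<in> cHom L (Fo x) (Fo y)) \<and>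
     (\<forall>x\<in>cObj K. Fm (cId K x) = cId L (Fo x)) \<and>
     (\<forall>x\<in>cObj K. \<forall>y\<in>cObj K. \<forall>z\<in>cObj K. \<forall>f g.
        f \<in> cHom K x y \<and> g \<in> cHom K y z \<longrightarrow> Fm (cComp K g f) = cComp L (Fm g) (Fm f))"

definition is_nat_trans ::
  "('x,'a) cat \<Rightarrow> ('x,'a) cat \<Rightarrow> ('x \<Rightarrow> 'x) \<Rightarrow> ('a \<Rightarrow> 'a) \<Rightarrow>
   ('x \<Rightarrow> 'x) \<Rightarrow> ('a \<Rightarrow> 'a) \<Rightarrow> ('x \<Rightarrow> 'a) \<Rightarrow> bool" where
  "is_nat_trans K L Fo Fm Go Gm \<tau> \<longleftrightarrow>
     (\<forall>x\<in>cObj K. \<tau> x \<in> cHom L (Fo x) (Go x)) \<and>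
     (\<forall>x\<in>cObj K. \<forall>y\<in>cObj K. \<forall>f\<in>cHom K x y.
        cComp L (Gm f) (\<tau> x) = cComp L (\<tau> y) (Fm f))"

text \<open>Underlying data with 1- and 2-morphisms (no axioms); hom1 A B = 1-morphisms A \<rightarrow> B,
  comp1 g f = g f (f first), hom2 f g = 2-morphisms f \<Rightarrow> g.\<close>
record ('o,'m,'t) pre2 =
  ob2   :: "'o set"
  hom1  :: "'o \<Rightarrow> 'o \<Rightarrow> 'm set"
  comp1 :: "'m \<Rightarrow> 'm \<Rightarrow> 'm"
  id1   :: "'o \<Rightarrow> 'm"
  hom2  :: "'m \<Rightarrow> 'm \<Rightarrow> 't set"

record ('o,'m,'t) two_cat = "('o,'m,'t) pre2" +
  vcomp :: "'t \<Rightarrow> 't \<Rightarrow> 't"   (* vcomp \<beta> \<alpha>: first \<alpha> then \<beta> *)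
  hcomp :: "'t \<Rightarrow> 't \<Rightarrow> 't"   (* hcomp \<beta> \<alpha>: \<alpha> on f, \<beta> on g, result on g f *)
  id2   :: "'m \<Rightarrow> 't"

definition is_2cat :: "('o,'m,'t) two_cat \<Rightarrow> bool" where
  "is_2cat C \<longleftrightarrow>
     (\<forall>A\<in>ob2 C. id1 C A \<in> hom1 C A A) \<and>
     (\<forall>A\<in>ob2 C. \<forall>B\<in>ob2 C. \<forall>E\<in>ob2 C. \<forall>f g.
        f \<in> hom1 C A B \<and> g \<in> hom1 C B E \<longrightarrow> comp1 C g f \<in> hom1 C A E) \<and>
     (\<forall>A\<in>ob2 C. \<forall>B\<in>ob2 C. \<forall>E\<in>ob2 C. \<forall>G\<in>ob2 C. \<forall>f g h.
        f \<in> hom1 C A B \<and> g \<in> hom1 C B E \<and> h \<in> hom1 C E G \<longrightarrow>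
        comp1 C h (comp1 C g f) = comp1 C (comp1 C h g) f) \<and>
     (\<forall>A\<in>ob2 C. \<forall>B\<in>ob2 C. \<forall>f\<in>hom1 C A B.
        comp1 C f (id1 C A) = f \<and> comp1 C (id1 C B) f = f) \<and>
     \<comment> \<open>vertical structure\<close>
     (\<forall>A\<in>ob2 C. \<forall>B\<in>ob2 C. \<forall>f\<in>hom1 C A B. id2 C f \<in> hom2 C f f) \<and>
     (\<forall>A\<in>ob2 C. \<forall>B\<in>ob2 C. \<forall>f\<in>hom1 C A B. \<forall>g\<in>hom1 C A B. \<forall>h\<in>hom1 C A B. \<forall>\<alpha> \<beta>.
        \<alpha> \<in> hom2 C f g \<and> \<beta> \<in> hom2 C g h \<longrightarrow> vcomp C \<beta> \<alpha> \<in> hom2 C f h) \<and>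
     (\<forall>A\<in>ob2 C. \<forall>B\<in>ob2 C. \<forall>f\<in>hom1 C A B. \<forall>g\<in>hom1 C A B. \<forall>h\<in>hom1 C A B.
        \<forall>k\<in>hom1 C A B. \<forall>\<alpha> \<beta> \<gamma>.
        \<alpha> \<in> hom2 C f g \<and> \<beta> \<in> hom2 C g h \<and> \<gamma> \<in> hom2 C h k \<longrightarrow>
        vcomp C \<gamma> (vcomp C \<beta> \<alpha>) = vcomp C (vcomp C \<gamma> \<beta>) \<alpha>) \<and>
     (\<forall>A\<in>ob2 C. \<forall>B\<in>ob2 C. \<forall>f\<in>hom1 C A B. \<forall>g\<in>hom1 C A B. \<forall>\<alpha>\<in>hom2 C f g.
        vcomp C \<alpha> (id2 C f) = \<alpha> \<and> vcomp C (id2 C g) \<alpha> = \<alpha>) \<and>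
     \<comment> \<open>horizontal structure\<close>
     (\<forall>A\<in>ob2 C. \<forall>B\<in>ob2 C. \<forall>E\<in>ob2 C. \<forall>f\<in>hom1 C A B. \<forall>f'\<in>hom1 C A B.
        \<forall>g\<in>hom1 C B E. \<forall>g'\<in>hom1 C B E. \<forall>\<alpha> \<beta>.
        \<alpha> \<in> hom2 C f f' \<and> \<beta> \<in> hom2 C g g' \<longrightarrow>
        hcomp C \<beta> \<alpha> \<in> hom2 C (comp1 C g f) (comp1 C g' f')) \<and>
     (\<forall>A\<in>ob2 C. \<forall>B\<in>ob2 C. \<forall>E\<in>ob2 C. \<forall>G\<in>ob2 C.
        \<forall>f\<in>hom1 C A B. \<forall>f'\<in>hom1 C A B. \<forall>g\<in>hom1 C B E. \<forall>g'\<in>hom1 C B E.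
        \<forall>h\<in>hom1 C E G. \<forall>h'\<in>hom1 C E G. \<forall>\<alpha> \<beta> \<gamma>.
        \<alpha> \<in> hom2 C f f' \<and> \<beta> \<in> hom2 C g g' \<and> \<gamma> \<in> hom2 C h h' \<longrightarrow>
        hcomp C \<gamma> (hcomp C \<beta> \<alpha>) = hcomp C (hcomp C \<gamma> \<beta>) \<alpha>) \<and>
     (\<forall>A\<in>ob2 C. \<forall>B\<in>ob2 C. \<forall>f\<in>hom1 C A B. \<forall>f'\<in>hom1 C A B. \<forall>\<alpha>\<in>hom2 C f f'.
        hcomp C (id2 C (id1 C B)) \<alpha> = \<alpha> \<and> hcomp C \<alpha> (id2 C (id1 C A)) = \<alpha>) \<and>
     (\<forall>A\<in>ob2 C. \<forall>B\<in>ob2 C. \<forall>E\<in>ob2 C. \<forall>f\<in>hom1 C A B. \<forall>g\<in>hom1 C B E.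
        hcomp C (id2 C g) (id2 C f) = id2 C (comp1 C g f)) \<and>
     (\<forall>A\<in>ob2 C. \<forall>B\<in>ob2 C. \<forall>E\<in>ob2 C.
        \<forall>f\<in>hom1 C A B. \<forall>f'\<in>hom1 C A B. \<forall>f''\<in>hom1 C A B.
        \<forall>g\<in>hom1 C B E. \<forall>g'\<in>hom1 C B E. \<forall>g''\<in>hom1 C B E. \<forall>\<alpha> \<alpha>' \<beta> \<beta>'.
        \<alpha> \<in> hom2 C f f' \<and> \<alpha>' \<in> hom2 C f' f'' \<and> \<beta> \<in> hom2 C g g' \<and> \<beta>' \<in> hom2 C g' g'' \<longrightarrow>
        hcomp C (vcomp C \<beta>' \<beta>) (vcomp C \<alpha>' \<alpha>) = vcomp C (hcomp C \<beta>' \<alpha>') (hcomp C \<beta> \<alpha>))"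

text \<open>For g : B \<rightarrow> A, (dobj D g, dmor D g) is the functor \<Delta>_g : \<Delta>(B) \<rightarrow> \<Delta>(A);
  for a 2-morphism \<alpha>, dcell D \<alpha> X is the component \<Delta>(\<alpha>)_X.\<close>
record ('o,'m,'t,'x,'a) two_functor =
  dcat  :: "'o \<Rightarrow> ('x,'a) cat"
  dobj  :: "'m \<Rightarrow> 'x \<Rightarrow> 'x"
  dmor  :: "'m \<Rightarrow> 'a \<Rightarrow> 'a"
  dcell :: "'t \<Rightarrow> 'x \<Rightarrow> 'a"

definition is_2functor :: "('o,'m,'t) two_cat \<Rightarrow> ('o,'m,'t,'x,'a) two_functor \<Rightarrow> bool" where
  "is_2functor C D \<longleftrightarrow>
     (\<forall>A\<in>ob2 C. is_category (dcat D A)) \<and>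
     (\<forall>A\<in>ob2 C. \<forall>B\<in>ob2 C. \<forall>f\<in>hom1 C A B.
        is_functor (dcat D A) (dcat D B) (dobj D f) (dmor D f)) \<and>
     (\<forall>A\<in>ob2 C. (\<forall>X\<in>cObj (dcat D A). dobj D (id1 C A) X = X) \<and>
        (\<forall>X\<in>cObj (dcat D A). \<forall>Y\<in>cObj (dcat D A). \<forall>u\<in>cHom (dcat D A) X Y.
           dmor D (id1 C A) u = u)) \<and>
     (\<forall>A\<in>ob2 C. \<forall>B\<in>ob2 C. \<forall>E\<in>ob2 C. \<forall>f\<in>hom1 C A B. \<forall>g\<in>hom1 C B E.
        (\<forall>X\<in>cObj (dcat D A). dobj D (comp1 C g f) X = dobj D g (dobj D f X)) \<and>
        (\<forall>X\<in>cObj (dcat D A). \<forall>Y\<in>cObj (dcat D A). \<forall>u\<in>cHom (dcat D A) X Y.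
           dmor D (comp1 C g f) u = dmor D g (dmor D f u))) \<and>
     (\<forall>A\<in>ob2 C. \<forall>B\<in>ob2 C. \<forall>f\<in>hom1 C A B. \<forall>f'\<in>hom1 C A B. \<forall>\<alpha>\<in>hom2 C f f'.
        is_nat_trans (dcat D A) (dcat D B) (dobj D f) (dmor D f) (dobj D f') (dmor D f')
          (dcell D \<alpha>)) \<and>
     (\<forall>A\<in>ob2 C. \<forall>B\<in>ob2 C. \<forall>f\<in>hom1 C A B. \<forall>X\<in>cObj (dcat D A).
        dcell D (id2 C f) X = cId (dcat D B) (dobj D f X)) \<and>
     (\<forall>A\<in>ob2 C. \<forall>B\<in>ob2 C. \<forall>f\<in>hom1 C A B. \<forall>g\<in>hom1 C A B. \<forall>h\<in>hom1 C A B.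
        \<forall>\<alpha>\<in>hom2 C f g. \<forall>\<beta>\<in>hom2 C g h. \<forall>X\<in>cObj (dcat D A).
        dcell D (vcomp C \<beta> \<alpha>) X = cComp (dcat D B) (dcell D \<beta> X) (dcell D \<alpha> X)) \<and>
     (\<forall>A\<in>ob2 C. \<forall>B\<in>ob2 C. \<forall>E\<in>ob2 C. \<forall>f\<in>hom1 C A B. \<forall>f'\<in>hom1 C A B.
        \<forall>g\<in>hom1 C B E. \<forall>g'\<in>hom1 C B E. \<forall>\<alpha>\<in>hom2 C f f'. \<forall>\<beta>\<in>hom2 C g g'.
        \<forall>X\<in>cObj (dcat D A).
        dcell D (hcomp C \<beta> \<alpha>) X =
          cComp (dcat D E) (dmor D g' (dcell D \<alpha> X)) (dcell D \<beta> (dobj D f X)))"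

definition is_lawvere_weight :: "('o,'m,'t,'z) pre2_scheme \<Rightarrow> ('m \<Rightarrow> ereal) \<Rightarrow> bool" where
  "is_lawvere_weight C W \<longleftrightarrow>
     (\<forall>A\<in>ob2 C. \<forall>B\<in>ob2 C. \<forall>f\<in>hom1 C A B. 0 \<le> W f) \<and>
     (\<forall>A\<in>ob2 C. W (id1 C A) = 0) \<and>
     (\<forall>A\<in>ob2 C. \<forall>B\<in>ob2 C. \<forall>E\<in>ob2 C. \<forall>f\<in>hom1 C A B. \<forall>g\<in>hom1 C B E.
        W (comp1 C g f) \<le> W g + W f)"

definition d_Delta ::
  "('o,'m,'t) two_cat \<Rightarrow> ('o,'m,'t,'x,'a) two_functor \<Rightarrow> ('m \<Rightarrow> ereal) \<Rightarrow>
   'o \<Rightarrow> 'x \<Rightarrow> 'o \<Rightarrow> 'x \<Rightarrow> ereal" where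
  "d_Delta C D W A X B Y = Inf {max (W g) (W h) | g h.
     g \<in> hom1 C B A \<and> h \<in> hom1 C A B \<and>
     (\<exists>\<phi> \<psi> \<alpha> \<beta>.
        \<phi> \<in> cHom (dcat D A) X (dobj D g Y) \<and> \<psi> \<in> cHom (dcat D B) Y (dobj D h X) \<and>
        \<alpha> \<in> hom2 C (id1 C A) (comp1 C g h) \<and> \<beta> \<in> hom2 C (id1 C B) (comp1 C h g) \<and>
        cComp (dcat D A) (dmor D g \<psi>) \<phi> = dcell D \<alpha> X \<and>
        cComp (dcat D B) (dmor D h \<phi>) \<psi> = dcell D \<beta> Y)}"

definition interleaving_dist ::
  "('o,'m,'t,'z) pre2_scheme \<Rightarrow> ('m \<Rightarrow> ereal) \<Rightarrow> ('t \<Rightarrow> ereal) \<Rightarrow> 'o \<Rightarrow> 'o \<Rightarrow> ereal" where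
  "interleaving_dist C W1 W2 x y = Inf {max (max (W1 u) (W1 v)) (max (W2 a) (W2 b)) | u v a b.
     u \<in> hom1 C x y \<and> v \<in> hom1 C y x \<and>
     a \<in> hom2 C (id1 C x) (comp1 C v u) \<and> b \<in> hom2 C (id1 C y) (comp1 C u v)}"

text \<open>A 2-morphism from u to u' is encoded by the pair (u,u')
  (there is at most one between any two 1-morphisms).\<close>

type_synonym ('o,'x) CDob = "'o \<times> 'x"
type_synonym ('o,'x,'m,'a) CDmor = "('o \<times> 'x) \<times> ('o \<times> 'x) \<times> ('m \<times> 'a)"

definition CD_ob :: "('o,'m,'t) two_cat \<Rightarrow> ('o,'m,'t,'x,'a) two_functor \<Rightarrow> ('o \<times> 'x) set" where
  "CD_ob C D = {(A, X). A \<in> ob2 C \<and> X \<in> cObj (dcat D A)}"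

definition CD_hom ::
  "('o,'m,'t) two_cat \<Rightarrow> ('o,'m,'t,'x,'a) two_functor \<Rightarrow> ('o \<times> 'x) \<Rightarrow> ('o \<times> 'x) \<Rightarrow>
   ('o,'x,'m,'a) CDmor set" where
  "CD_hom C D x y = {(x, y, (g, \<phi>)) | g \<phi>.
     x \<in> CD_ob C D \<and> y \<in> CD_ob C D \<and> g \<in> hom1 C (fst y) (fst x) \<and>
     \<phi> \<in> cHom (dcat D (fst x)) (snd x) (dobj D g (snd y))}"

definition CD_comp ::
  "('o,'m,'t) two_cat \<Rightarrow> ('o,'m,'t,'x,'a) two_functor \<Rightarrow>
   ('o,'x,'m,'a) CDmor \<Rightarrow> ('o,'x,'m,'a) CDmor \<Rightarrow> ('o,'x,'m,'a) CDmor" where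
  "CD_comp C D v u = (case u of (x, y, (g, \<phi>)) \<Rightarrow> (case v of (y', z, (h, \<psi>)) \<Rightarrow>
     (x, z, (comp1 C g h, cComp (dcat D (fst x)) (dmor D g \<psi>) \<phi>))))"

definition CD_id ::
  "('o,'m,'t) two_cat \<Rightarrow> ('o,'m,'t,'x,'a) two_functor \<Rightarrow> ('o \<times> 'x) \<Rightarrow> ('o,'x,'m,'a) CDmor" where
  "CD_id C D x = (x, x, (id1 C (fst x), cId (dcat D (fst x)) (snd x)))"

definition CD_hom2 ::
  "('o,'m,'t) two_cat \<Rightarrow> ('o,'m,'t,'x,'a) two_functor \<Rightarrow>
   ('o,'x,'m,'a) CDmor \<Rightarrow> ('o,'x,'m,'a) CDmor \<Rightarrow>
   (('o,'x,'m,'a) CDmor \<times> ('o,'x,'m,'a) CDmor) set" where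
  "CD_hom2 C D u u' = (if
     \<comment> \<open>identity 2-morphism of a 1-morphism\<close>
     (u = u' \<and> (\<exists>x\<in>CD_ob C D. \<exists>y\<in>CD_ob C D. u \<in> CD_hom C D x y)) \<or>
     \<comment> \<open>the 2-morphism \<psi>-hat from (1_A,1_X) to (h,\<psi>)\<close>
     (\<exists>x\<in>CD_ob C D. u = CD_id C D x \<and> u' \<in> CD_hom C D x x \<and>
        (\<exists>\<alpha>. \<alpha> \<in> hom2 C (id1 C (fst x)) (fst (snd (snd u'))) \<and>
             dcell D \<alpha> (snd x) = snd (snd (snd u'))))
     then {(u, u')} else {})"

definition CDelta ::
  "('o,'m,'t) two_cat \<Rightarrow> ('o,'m,'t,'x,'a) two_functor \<Rightarrow>
   ('o \<times> 'x, ('o,'x,'m,'a) CDmor, ('o,'x,'m,'a) CDmor \<times> ('o,'x,'m,'a) CDmor) pre2" where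
  "CDelta C D = \<lparr> ob2 = CD_ob C D, hom1 = CD_hom C D, comp1 = CD_comp C D,
                  id1 = CD_id C D, hom2 = CD_hom2 C D \<rparr>"

definition W1Delta :: "('m \<Rightarrow> ereal) \<Rightarrow> ('o,'x,'m,'a) CDmor \<Rightarrow> ereal" where
  "W1Delta W u = W (fst (snd (snd u)))"

definition W2Delta :: "('o,'x,'m,'a) CDmor \<times> ('o,'x,'m,'a) CDmor \<Rightarrow> ereal" where
  "W2Delta a = 0"

end

theory Submission
  imports Defs
begin

text \<open>A 1-morphism of \<open>C\<^sup>\<Delta>\<close> from \<open>(A, X)\<close> to \<open>(B, Y)\<close> is exactly a pair \<open>(g, \<phi>)\<close> as in a
  2-functor interleaving, and composing the two legs of such a pair gives \<open>(g h, \<Delta>\<^sub>g(\<psi>) \<circ> \<phi>)\<close>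
  and \<open>(h g, \<Delta>\<^sub>h(\<phi>) \<circ> \<psi>)\<close>. A 2-morphism from the identity to \<open>(g h, \<Delta>\<^sub>g(\<psi>) \<circ> \<phi>)\<close> exists
  precisely when \<open>\<Delta>\<^sub>g(\<psi>) \<circ> \<phi> = \<Delta>(\<alpha>)\<^sub>X\<close> for some \<open>\<alpha> : 1\<^sub>A \<Rightarrow> g h\<close>, so interleavings on both
  sides correspond. The costs agree because \<open>W\<^sup>\<Delta>\<^sub>2 = 0\<close> and \<open>W \<ge> 0\<close>.\<close>

lemma is_2cat_id1_hom: "is_2cat C \<Longrightarrow> A \<in> ob2 C \<Longrightarrow> id1 C A \<in> hom1 C A A"
  by (simp add: is_2cat_def)

lemma is_2cat_comp1_hom:
  "is_2cat C \<Longrightarrow> A \<in> ob2 C \<Longrightarrow> B \<in> ob2 C \<Longrightarrow> E \<in> ob2 C \<Longrightarrow>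
   f \<in> hom1 C A B \<Longrightarrow> g \<in> hom1 C B E \<Longrightarrow> comp1 C g f \<in> hom1 C A E"
  by (simp add: is_2cat_def)

lemma is_2cat_id2_hom:
  "is_2cat C \<Longrightarrow> A \<in> ob2 C \<Longrightarrow> B \<in> ob2 C \<Longrightarrow> f \<in> hom1 C A B \<Longrightarrow> id2 C f \<in> hom2 C f f"
  by (simp add: is_2cat_def)

lemma lawvere_weight_nonneg:
  "is_lawvere_weight C W \<Longrightarrow> A \<in> ob2 C \<Longrightarrow> B \<in> ob2 C \<Longrightarrow> f \<in> hom1 C A B \<Longrightarrow> 0 \<le> W f"
  by (simp add: is_lawvere_weight_def)

lemma is_2functor_dobj_id1:
  "is_2functor C D \<Longrightarrow> A \<in> ob2 C \<Longrightarrow> X \<in> cObj (dcat D A) \<Longrightarrow> dobj D (id1 C A) X = X"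
  by (simp add: is_2functor_def)

lemma is_2functor_dcell_id2:
  "is_2functor C D \<Longrightarrow> A \<in> ob2 C \<Longrightarrow> B \<in> ob2 C \<Longrightarrow> f \<in> hom1 C A B \<Longrightarrow>
   X \<in> cObj (dcat D A) \<Longrightarrow> dcell D (id2 C f) X = cId (dcat D B) (dobj D f X)"
  by (simp add: is_2functor_def)

lemma is_2functor_dcell_hom:
  "is_2functor C D \<Longrightarrow> A \<in> ob2 C \<Longrightarrow> B \<in> ob2 C \<Longrightarrow> f \<in> hom1 C A B \<Longrightarrow> f' \<in> hom1 C A B \<Longrightarrow>
   \<alpha> \<in> hom2 C f f' \<Longrightarrow> X \<in> cObj (dcat D A) \<Longrightarrow>
   dcell D \<alpha> X \<in> cHom (dcat D B) (dobj D f X) (dobj D f' X)"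
  by (simp add: is_2functor_def is_nat_trans_def)

lemma CD_hom_iff:
  assumes "A \<in> ob2 C" "X \<in> cObj (dcat D A)" "B \<in> ob2 C" "Y \<in> cObj (dcat D B)"
  shows "u \<in> CD_hom C D (A, X) (B, Y) \<longleftrightarrow>
    (\<exists>g \<phi>. u = ((A, X), (B, Y), (g, \<phi>)) \<and> g \<in> hom1 C B A \<and> \<phi> \<in> cHom (dcat D A) X (dobj D g Y))"
  using assms by (auto simp: CD_hom_def CD_ob_def)

lemma CD_comp_legs:
  "CD_comp C D (y, x, (h, \<psi>)) (x, y, (g, \<phi>)) =
     (x, x, (comp1 C g h, cComp (dcat D (fst x)) (dmor D g \<psi>) \<phi>))"
  by (simp add: CD_comp_def)

lemma CD_hom2_from_id_nonempty_iff:
  assumes C: "is_2cat C" and D: "is_2functor C D"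
    and A: "A \<in> ob2 C" and X: "X \<in> cObj (dcat D A)" and f: "f \<in> hom1 C A A"
  shows "CD_hom2 C D (CD_id C D (A, X)) ((A, X), (A, X), (f, c)) \<noteq> {} \<longleftrightarrow>
    (\<exists>\<alpha>. \<alpha> \<in> hom2 C (id1 C A) f \<and> c = dcell D \<alpha> X)"
proof
  assume "CD_hom2 C D (CD_id C D (A, X)) ((A, X), (A, X), (f, c)) \<noteq> {}"
  then have "CD_id C D (A, X) = ((A, X), (A, X), (f, c)) \<or>
    (\<exists>x\<in>CD_ob C D. CD_id C D (A, X) = CD_id C D x \<and>
         (\<exists>\<alpha>. \<alpha> \<in> hom2 C (id1 C (fst x)) f \<and> dcell D \<alpha> (snd x) = c))"
    unfolding CD_hom2_def by (simp only: fst_conv snd_conv split: if_split_asm) blast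
  then consider "f = id1 C A" "c = cId (dcat D A) X"
    | "\<exists>\<alpha>. \<alpha> \<in> hom2 C (id1 C A) f \<and> dcell D \<alpha> X = c"
    unfolding CD_id_def by auto
  then show "\<exists>\<alpha>. \<alpha> \<in> hom2 C (id1 C A) f \<and> c = dcell D \<alpha> X"
  proof cases
    case 1
    have "id2 C (id1 C A) \<in> hom2 C (id1 C A) (id1 C A)"
      using is_2cat_id2_hom[OF C A A is_2cat_id1_hom[OF C A]] .
    moreover have "dcell D (id2 C (id1 C A)) X = cId (dcat D A) X"
      using is_2functor_dcell_id2[OF D A A is_2cat_id1_hom[OF C A] X]
      by (simp add: is_2functor_dobj_id1[OF D A X])
    ultimately show ?thesis using 1 by metis
  qed auto
next
  assume "\<exists>\<alpha>. \<alpha> \<in> hom2 C (id1 C A) f \<and> c = dcell D \<alpha> X"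
  then obtain \<alpha> where \<alpha>: "\<alpha> \<in> hom2 C (id1 C A) f" and c: "c = dcell D \<alpha> X" by blast
  have "c \<in> cHom (dcat D A) X (dobj D f X)"
    using is_2functor_dcell_hom[OF D A A is_2cat_id1_hom[OF C A] f \<alpha> X]
    by (simp add: c is_2functor_dobj_id1[OF D A X])
  then have "((A, X), (A, X), (f, c)) \<in> CD_hom C D (A, X) (A, X)"
    using CD_hom_iff[OF A X A X] f by blast
  moreover have "(A, X) \<in> CD_ob C D"
    using A X by (simp add: CD_ob_def)
  ultimately have "\<exists>x\<in>CD_ob C D. CD_id C D (A, X) = CD_id C D x \<and>
      ((A, X), (A, X), (f, c)) \<in> CD_hom C D x x \<and>
      (\<exists>\<alpha>. \<alpha> \<in> hom2 C (id1 C (fst x)) f \<and> dcell D \<alpha> (snd x) = c)"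
    using \<alpha> c by (intro bexI[of _ "(A, X)"]) auto
  then show "CD_hom2 C D (CD_id C D (A, X)) ((A, X), (A, X), (f, c)) \<noteq> {}"
    unfolding CD_hom2_def by (simp only: fst_conv snd_conv split: if_split) blast
qed

lemma CDelta_2cells_iff:
  fixes \<phi> \<psi>
  assumes C: "is_2cat C" and D: "is_2functor C D"
    and A: "A \<in> ob2 C" and X: "X \<in> cObj (dcat D A)"
    and B: "B \<in> ob2 C" and Y: "Y \<in> cObj (dcat D B)"
    and g: "g \<in> hom1 C B A" and h: "h \<in> hom1 C A B"
  defines "u \<equiv> ((A, X), (B, Y), (g, \<phi>))" and "v \<equiv> ((B, Y), (A, X), (h, \<psi>))"
  shows "(\<exists>a b. a \<in> hom2 (CDelta C D) (id1 (CDelta C D) (A, X)) (comp1 (CDelta C D) v u) \<and>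
                b \<in> hom2 (CDelta C D) (id1 (CDelta C D) (B, Y)) (comp1 (CDelta C D) u v)) \<longleftrightarrow>
    (\<exists>\<alpha> \<beta>. \<alpha> \<in> hom2 C (id1 C A) (comp1 C g h) \<and> \<beta> \<in> hom2 C (id1 C B) (comp1 C h g) \<and>
       cComp (dcat D A) (dmor D g \<psi>) \<phi> = dcell D \<alpha> X \<and>
       cComp (dcat D B) (dmor D h \<phi>) \<psi> = dcell D \<beta> Y)"
proof -
  have gh: "comp1 C g h \<in> hom1 C A A" and hg: "comp1 C h g \<in> hom1 C B B"
    using is_2cat_comp1_hom[OF C A B A h g] is_2cat_comp1_hom[OF C B A B g h] .
  have vu: "comp1 (CDelta C D) v u =
      ((A, X), (A, X), (comp1 C g h, cComp (dcat D A) (dmor D g \<psi>) \<phi>))"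
    and uv: "comp1 (CDelta C D) u v =
      ((B, Y), (B, Y), (comp1 C h g, cComp (dcat D B) (dmor D h \<phi>) \<psi>))"
    by (simp_all add: CDelta_def u_def v_def CD_comp_legs)
  have hom2_id1: "hom2 (CDelta C D) = CD_hom2 C D" "id1 (CDelta C D) = CD_id C D"
    by (simp_all add: CDelta_def)
  have ex_pair_in_iff: "(\<exists>a b. a \<in> S \<and> b \<in> T) \<longleftrightarrow> S \<noteq> {} \<and> T \<noteq> {}" for S T :: "'s set"
    by blast
  show ?thesis
    unfolding hom2_id1 vu uv ex_pair_in_iff CD_hom2_from_id_nonempty_iff[OF C D A X gh]
      CD_hom2_from_id_nonempty_iff[OF C D B Y hg]
    by blast
qed

lemma CDelta_cost:
  "0 \<le> W g \<Longrightarrow> 0 \<le> W h \<Longrightarrow>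
   max (max (W1Delta W (x, y, (g, \<phi>))) (W1Delta W (y, x, (h, \<psi>)))) (max (W2Delta a) (W2Delta b)) =
   max (W g) (W h)"
  by (simp add: W1Delta_def W2Delta_def max_def)

definition delta_interleaved ::
  "('o,'m,'t) two_cat \<Rightarrow> ('o,'m,'t,'x,'a) two_functor \<Rightarrow> 'o \<Rightarrow> 'x \<Rightarrow> 'o \<Rightarrow> 'x \<Rightarrow> 'm \<Rightarrow> 'm \<Rightarrow> bool"
  where "delta_interleaved C D A X B Y g h \<longleftrightarrow>
    (\<exists>\<phi> \<psi> \<alpha> \<beta>.
       \<phi> \<in> cHom (dcat D A) X (dobj D g Y) \<and> \<psi> \<in> cHom (dcat D B) Y (dobj D h X) \<and>
       \<alpha> \<in> hom2 C (id1 C A) (comp1 C g h) \<and> \<beta> \<in> hom2 C (id1 C B) (comp1 C h g) \<and>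
       cComp (dcat D A) (dmor D g \<psi>) \<phi> = dcell D \<alpha> X \<and>
       cComp (dcat D B) (dmor D h \<phi>) \<psi> = dcell D \<beta> Y)"

lemma CDelta_interleaving_costs:
  assumes C: "is_2cat C" and W: "is_lawvere_weight C W" and D: "is_2functor C D"
    and A: "A \<in> ob2 C" and X: "X \<in> cObj (dcat D A)"
    and B: "B \<in> ob2 C" and Y: "Y \<in> cObj (dcat D B)"
  shows "{max (max (W1Delta W u) (W1Delta W v)) (max (W2Delta a) (W2Delta b)) | u v a b.
            u \<in> hom1 (CDelta C D) (A, X) (B, Y) \<and> v \<in> hom1 (CDelta C D) (B, Y) (A, X) \<and>
            a \<in> hom2 (CDelta C D) (id1 (CDelta C D) (A, X)) (comp1 (CDelta C D) v u) \<and>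
            b \<in> hom2 (CDelta C D) (id1 (CDelta C D) (B, Y)) (comp1 (CDelta C D) u v)} =
         {max (W g) (W h) | g h.
            g \<in> hom1 C B A \<and> h \<in> hom1 C A B \<and> delta_interleaved C D A X B Y g h}"
    (is "?T = ?S")
proof (intro set_eqI iffI)
  fix r assume "r \<in> ?T"
  then obtain u v a b where r: "r = max (max (W1Delta W u) (W1Delta W v)) (max (W2Delta a) (W2Delta b))"
    and u: "u \<in> CD_hom C D (A, X) (B, Y)" and v: "v \<in> CD_hom C D (B, Y) (A, X)"
    and ab: "a \<in> hom2 (CDelta C D) (id1 (CDelta C D) (A, X)) (comp1 (CDelta C D) v u)"
            "b \<in> hom2 (CDelta C D) (id1 (CDelta C D) (B, Y)) (comp1 (CDelta C D) u v)"
    by (auto simp: CDelta_def)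
  obtain g \<phi> where u_eq: "u = ((A, X), (B, Y), (g, \<phi>))"
    and g: "g \<in> hom1 C B A" and \<phi>: "\<phi> \<in> cHom (dcat D A) X (dobj D g Y)"
    using u CD_hom_iff[OF A X B Y] by blast
  obtain h \<psi> where v_eq: "v = ((B, Y), (A, X), (h, \<psi>))"
    and h: "h \<in> hom1 C A B" and \<psi>: "\<psi> \<in> cHom (dcat D B) Y (dobj D h X)"
    using v CD_hom_iff[OF B Y A X] by blast
  have W_nonneg: "0 \<le> W g" "0 \<le> W h"
    using lawvere_weight_nonneg[OF W B A g] lawvere_weight_nonneg[OF W A B h] .
  have "delta_interleaved C D A X B Y g h"
    using ab \<phi> \<psi> CDelta_2cells_iff[OF C D A X B Y g h, where \<phi> = \<phi> and \<psi> = \<psi>]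
    unfolding delta_interleaved_def u_eq v_eq by blast
  moreover have "r = max (W g) (W h)"
    unfolding r u_eq v_eq by (rule CDelta_cost[of W g h, OF W_nonneg])
  ultimately show "r \<in> ?S" using g h by blast
next
  fix r assume "r \<in> ?S"
  then obtain g h \<phi> \<psi> \<alpha> \<beta> where r: "r = max (W g) (W h)"
    and g: "g \<in> hom1 C B A" and h: "h \<in> hom1 C A B"
    and \<phi>: "\<phi> \<in> cHom (dcat D A) X (dobj D g Y)" and \<psi>: "\<psi> \<in> cHom (dcat D B) Y (dobj D h X)"
    and \<alpha>\<beta>: "\<alpha> \<in> hom2 C (id1 C A) (comp1 C g h)" "\<beta> \<in> hom2 C (id1 C B) (comp1 C h g)"
      "cComp (dcat D A) (dmor D g \<psi>) \<phi> = dcell D \<alpha> X"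
      "cComp (dcat D B) (dmor D h \<phi>) \<psi> = dcell D \<beta> Y"
    unfolding delta_interleaved_def by blast
  have W_nonneg: "0 \<le> W g" "0 \<le> W h"
    using lawvere_weight_nonneg[OF W B A g] lawvere_weight_nonneg[OF W A B h] .
  define u where "u = ((A, X), (B, Y), (g, \<phi>))"
  define v where "v = ((B, Y), (A, X), (h, \<psi>))"
  have "u \<in> hom1 (CDelta C D) (A, X) (B, Y)" "v \<in> hom1 (CDelta C D) (B, Y) (A, X)"
    using CD_hom_iff[OF A X B Y] CD_hom_iff[OF B Y A X] g h \<phi> \<psi>
    by (auto simp: CDelta_def u_def v_def)
  moreover obtain a b where
    "a \<in> hom2 (CDelta C D) (id1 (CDelta C D) (A, X)) (comp1 (CDelta C D) v u)"
    "b \<in> hom2 (CDelta C D) (id1 (CDelta C D) (B, Y)) (comp1 (CDelta C D) u v)"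
    using \<alpha>\<beta> CDelta_2cells_iff[OF C D A X B Y g h] unfolding u_def v_def by blast
  moreover have "r = max (max (W1Delta W u) (W1Delta W v)) (max (W2Delta a) (W2Delta b))"
    unfolding r u_def v_def by (rule CDelta_cost[of W g h, OF W_nonneg, symmetric])
  ultimately show "r \<in> ?T" by blast
qed

theorem lemma5p17:
  fixes C :: "('o,'m,'t) two_cat"
    and D :: "('o,'m,'t,'x,'a) two_functor"
    and W :: "'m \<Rightarrow> ereal"
  assumes "is_2cat C"
    and "is_lawvere_weight C W"
    and "is_2functor C D"
    and "A \<in> ob2 C" and "X \<in> cObj (dcat D A)"
    and "B \<in> ob2 C" and "Y \<in> cObj (dcat D B)"
  shows "d_Delta C D W A X B Y =
         interleaving_dist (CDelta C D) (W1Delta W) W2Delta (A, X) (B, Y)"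
  unfolding interleaving_dist_def CDelta_interleaving_costs[OF assms]
  by (simp add: d_Delta_def delta_interleaved_def)

end
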